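(* Let $n \ge d \ge 1$ be integers. Let $R^{\mathrm{S}}\in\{0,+1,-1\}^{d\times n}$ be a random matrix produced by the S-SSE construction and $R^{\mathrm{SE}}\in\{0,+1,-1\}^{d\times n}$ a random matrix produced by the SE construction (both described in the context). Fix a row index $t\in[d]$, let $\mathbf{Y}$ be the number of nonzero entries in row $t$ of $R^{\mathrm{S}}$, and let $\mathbf{Z}$ be the number of nonzero entries in row $t$ of $R^{\mathrm{SE}}$. Then $$\mathbb{E}(\mathbf{Y})=\mathbb{E}(\mathbf{Z}),\qquad \operatorname{Var}(\mathbf{Y})\le \operatorname{Var}(\mathbf{Z}).$$
   Context: $[k]=\{1,\dots,k\}$. SE (sparse embedding) construction: choose independently for each column $i\in[n]$ a row label $h(i)$ uniformly at random from $[d]$ (i.e. uniform sampling with replacement), and independent Rademacher signs $\sigma_i\in\{+1,-1\}$ (each with probability $1/2$); set $R^{\mathrm{SE}}_{h(i),i}=\sigma_i$ and all other entries $0$. S-SSE (stable sparse subspace embedding) construction: form the multiset $D$ consisting of $[d]$ repeated $\lceil n/d\rceil$ times; draw $n$ elements from $D$ uniformly at random without replacement, giving a sequence $\mathcal{S}=(\mathcal{S}(1),\dots,\mathcal{S}(n))$; independently choose Rademacher signs $\sigma_i\in\{+1,-1\}$ with probability $1/2$ each; set $R^{\mathrm{S}}_{\mathcal{S}(i),i}=\sigma_i$ for $i\in[n]$ and all other entries $0$. In both constructions each column has exactly one nonzero entry. *)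

theory Defs
  imports "HOL-Probability.Probability"
begin

text \<open>Matrices in {0,+1,-1}^(d x n) are modelled as functions
  row index \<Rightarrow> column index \<Rightarrow> int, with rows in {1..d} and columns in {1..n}.\<close>

definition sign_of :: "bool \<Rightarrow> int" where
  "sign_of b = (if b then 1 else -1)"

definition col_matrix :: "nat \<Rightarrow> (nat \<Rightarrow> nat) \<Rightarrow> (nat \<Rightarrow> bool) \<Rightarrow> nat \<Rightarrow> nat \<Rightarrow> int" where
  "col_matrix n h \<sigma> = (\<lambda>r c. if c \<in> {1..n} \<and> h c = r then sign_of (\<sigma> c) else 0)"

definition rademacher_signs :: "nat \<Rightarrow> (nat \<Rightarrow> bool) pmf" where
  "rademacher_signs n = Pi_pmf {1..n} False (\<lambda>_. pmf_of_set (UNIV :: bool set))"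

definition SE_pmf :: "nat \<Rightarrow> nat \<Rightarrow> (nat \<Rightarrow> nat \<Rightarrow> int) pmf" where
  "SE_pmf d n =
     map_pmf (\<lambda>(h, \<sigma>). col_matrix n h \<sigma>)
       (pair_pmf (Pi_pmf {1..n} 0 (\<lambda>_. pmf_of_set {1..d})) (rademacher_signs n))"

text \<open>The multiset D: [d] repeated ceil(n/d) times, listed as a list.\<close>
definition D_list :: "nat \<Rightarrow> nat \<Rightarrow> nat list" where
  "D_list d n = concat (replicate (nat \<lceil>real n / real d\<rceil>) [1..<d+1])"

text \<open>Drawing n elements of D uniformly without replacement: an injective
  assignment of distinct positions of D to columns 1..n, chosen uniformly.\<close>
definition S_seq_pmf :: "nat \<Rightarrow> nat \<Rightarrow> (nat \<Rightarrow> nat) pmf" where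
  "S_seq_pmf d n =
     map_pmf (\<lambda>f i. D_list d n ! f i)
       (pmf_of_set {f. f \<in> {1..n} \<rightarrow>\<^sub>E {0..<length (D_list d n)} \<and> inj_on f {1..n}})"

definition SSSE_pmf :: "nat \<Rightarrow> nat \<Rightarrow> (nat \<Rightarrow> nat \<Rightarrow> int) pmf" where
  "SSSE_pmf d n =
     map_pmf (\<lambda>(S, \<sigma>). col_matrix n S \<sigma>) (pair_pmf (S_seq_pmf d n) (rademacher_signs n))"

definition row_nnz :: "nat \<Rightarrow> nat \<Rightarrow> (nat \<Rightarrow> nat \<Rightarrow> int) \<Rightarrow> real" where
  "row_nnz n t R = real (card {c \<in> {1..n}. R t c \<noteq> 0})"

end

theory Submission
  imports Defs
begin

(* Both counts are sums over the n columns of the indicator that the column lands in row t, so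
   their first two moments are sums of the probabilities that one column, resp. two distinct
   columns, land in row t.  In both constructions one column does so with probability 1/d.
   For two columns SE gives 1/d^2 by independence, whereas S-SSE places them at two distinct
   positions drawn uniformly from the kd positions of D, k of which are labelled t, which gives
   k(k-1)/(kd(kd-1)) <= 1/d^2.  That the position pair of a uniformly random injection is uniform
   on distinct pairs follows from its invariance under permutations of the codomain. *)

lemma real_card_filter_eq_sum_indicator:
  "finite C \<Longrightarrow> real (card {c\<in>C. P x c}) = (\<Sum>c\<in>C. indicator {x. P x c} x)"
  by (simp add: indicator_def sum.If_cases Int_def)

lemma expectation_card_filter:
  fixes M :: "'a pmf"
  assumes "finite C"
  shows "measure_pmf.expectation M (\<lambda>x. real (card {c\<in>C. P x c}))
           = (\<Sum>c\<in>C. measure_pmf.prob M {x. P x c})"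
  using assms by (simp add: real_card_filter_eq_sum_indicator less_top[symmetric])

lemma expectation_card_filter_squared:
  fixes M :: "'a pmf"
  assumes "finite C"
  shows "measure_pmf.expectation M (\<lambda>x. (real (card {c\<in>C. P x c}))\<^sup>2)
           = (\<Sum>c\<in>C. \<Sum>c'\<in>C. measure_pmf.prob M {x. P x c \<and> P x c'})"
proof -
  have "(real (card {c\<in>C. P x c}))\<^sup>2 = (\<Sum>c\<in>C. \<Sum>c'\<in>C. indicator {x. P x c \<and> P x c'} x)" for x
    unfolding power2_eq_square real_card_filter_eq_sum_indicator[OF assms] sum_product
    by (simp add: indicator_def of_bool_conj)
  with assms show ?thesis
    by (simp add: less_top[symmetric])
qed

lemma integrable_card_filter_power:
  fixes M :: "'a pmf"
  assumes "finite C"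
  shows "integrable M (\<lambda>x. real (card {c\<in>C. P x c}) ^ k)"
  using assms
  by (intro measure_pmf.integrable_const_bound[where B = "real (card C) ^ k"])
     (auto intro!: power_mono card_mono)

lemma variance_card_filter:
  fixes M :: "'a pmf"
  assumes "finite C"
  shows "measure_pmf.variance M (\<lambda>x. real (card {c\<in>C. P x c}))
           = (\<Sum>c\<in>C. \<Sum>c'\<in>C. measure_pmf.prob M {x. P x c \<and> P x c'})
             - (\<Sum>c\<in>C. measure_pmf.prob M {x. P x c})\<^sup>2"
  using integrable_card_filter_power[OF assms, of M P 1] integrable_card_filter_power[OF assms, of M P 2]
  by (subst measure_pmf.variance_eq) (simp_all add: assms expectation_card_filter expectation_card_filter_squared)

lemma card_filter_expectation_eq_variance_le:
  fixes M :: "'a pmf" and N :: "'b pmf"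
  assumes "finite C"
    and single: "\<And>c. c \<in> C \<Longrightarrow> measure_pmf.prob M {x. P x c} = measure_pmf.prob N {y. Q y c}"
    and pair: "\<And>c c'. c \<in> C \<Longrightarrow> c' \<in> C \<Longrightarrow> c \<noteq> c' \<Longrightarrow>
                 measure_pmf.prob M {x. P x c \<and> P x c'} \<le> measure_pmf.prob N {y. Q y c \<and> Q y c'}"
  shows "measure_pmf.expectation M (\<lambda>x. real (card {c\<in>C. P x c}))
           = measure_pmf.expectation N (\<lambda>y. real (card {c\<in>C. Q y c}))
       \<and> measure_pmf.variance M (\<lambda>x. real (card {c\<in>C. P x c}))
           \<le> measure_pmf.variance N (\<lambda>y. real (card {c\<in>C. Q y c}))"
proof
  have sums: "(\<Sum>c\<in>C. measure_pmf.prob M {x. P x c}) = (\<Sum>c\<in>C. measure_pmf.prob N {y. Q y c})"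
    using single by (rule sum.cong[OF refl])
  then show "measure_pmf.expectation M (\<lambda>x. real (card {c\<in>C. P x c}))
           = measure_pmf.expectation N (\<lambda>y. real (card {c\<in>C. Q y c}))"
    using assms(1) by (simp add: expectation_card_filter)
  have "measure_pmf.prob M {x. P x c \<and> P x c'} \<le> measure_pmf.prob N {y. Q y c \<and> Q y c'}"
    if "c \<in> C" "c' \<in> C" for c c'
    using that single[of c] pair[of c c'] by (cases "c = c'") simp_all
  then have "(\<Sum>c\<in>C. \<Sum>c'\<in>C. measure_pmf.prob M {x. P x c \<and> P x c'})
           \<le> (\<Sum>c\<in>C. \<Sum>c'\<in>C. measure_pmf.prob N {y. Q y c \<and> Q y c'})"
    by (intro sum_mono) simp
  then show "measure_pmf.variance M (\<lambda>x. real (card {c\<in>C. P x c}))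
           \<le> measure_pmf.variance N (\<lambda>y. real (card {c\<in>C. Q y c}))"
    using assms(1) sums by (simp add: variance_card_filter)
qed

lemma measure_pmf_prob_cong_set_pmf:
  assumes "\<And>x. x \<in> set_pmf p \<Longrightarrow> x \<in> A \<longleftrightarrow> x \<in> B"
  shows "measure_pmf.prob p A = measure_pmf.prob p B"
proof -
  have "A \<inter> set_pmf p = B \<inter> set_pmf p"
    using assms by blast
  then show ?thesis
    by (metis measure_Int_set_pmf)
qed

lemma pmf_of_set_eqI_transitive_symmetry:
  assumes "finite Y" and "set_pmf \<mu> \<subseteq> Y"
    and sym: "\<And>y y'. y \<in> Y \<Longrightarrow> y' \<in> Y \<Longrightarrow> \<exists>\<psi>. inj \<psi> \<and> \<psi> y = y' \<and> map_pmf \<psi> \<mu> = \<mu>"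
  shows "\<mu> = pmf_of_set Y"
proof -
  obtain y0 where y0: "y0 \<in> Y"
    using assms(2) set_pmf_not_empty[of \<mu>] by blast
  have const: "pmf \<mu> y = pmf \<mu> y0" if y: "y \<in> Y" for y
  proof -
    obtain \<psi> where "inj \<psi>" "\<psi> y0 = y" "map_pmf \<psi> \<mu> = \<mu>"
      using sym[OF y0 y] by blast
    then show ?thesis
      using pmf_map_inj'[of \<psi> \<mu> y0] by simp
  qed
  have "real (card Y) * pmf \<mu> y0 = 1"
    using sum_pmf_eq_1[OF assms(1,2)] const by simp
  then have "pmf \<mu> y0 = 1 / card Y"
    using y0 assms(1) by (auto simp: eq_divide_eq mult.commute)
  then have "pmf \<mu> y = indicator Y y / card Y" for y
    using const assms(2) set_pmf_iff[of y \<mu>] by (cases "y \<in> Y") auto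
  moreover have "Y \<noteq> {}"
    using y0 by blast
  ultimately show ?thesis
    using assms(1) by (intro pmf_eqI) simp
qed

definition inj_funcset :: "'a set \<Rightarrow> 'b set \<Rightarrow> ('a \<Rightarrow> 'b) set" where
  "inj_funcset A B = {f \<in> A \<rightarrow>\<^sub>E B. inj_on f A}"

lemma finite_inj_funcset: "finite A \<Longrightarrow> finite B \<Longrightarrow> finite (inj_funcset A B)"
  unfolding inj_funcset_def by (rule finite_subset[OF _ finite_PiE]) auto

lemma inj_funcset_apply_in: "f \<in> inj_funcset A B \<Longrightarrow> a \<in> A \<Longrightarrow> f a \<in> B"
  by (auto simp: inj_funcset_def)

lemma inj_funcset_nonempty:
  assumes "finite A" "finite B" "card A \<le> card B"
  shows "inj_funcset A B \<noteq> {}"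
proof -
  obtain f where "f \<in> A \<rightarrow> B" "inj_on f A"
    using card_le_inj[OF assms] by blast
  then have "restrict f A \<in> inj_funcset A B"
    unfolding inj_funcset_def by (auto simp: inj_on_def)
  then show ?thesis by blast
qed

lemma permutes_comp_in_inj_funcset:
  assumes "\<pi> permutes B" and "f \<in> inj_funcset A B"
  shows "restrict (\<pi> \<circ> f) A \<in> inj_funcset A B"
proof -
  have "inj_on (\<pi> \<circ> f) A"
    using assms permutes_inj[OF assms(1)] by (intro comp_inj_on) (auto simp: inj_funcset_def inj_on_def)
  then show ?thesis
    using assms by (auto simp: inj_funcset_def permutes_in_image)
qed

lemma set_pmf_of_inj_funcset:
  "finite A \<Longrightarrow> finite B \<Longrightarrow> card A \<le> card B
     \<Longrightarrow> set_pmf (pmf_of_set (inj_funcset A B)) = inj_funcset A B"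
  by (simp add: finite_inj_funcset inj_funcset_nonempty)

lemma bij_betw_inj_funcset_permutes:
  assumes "\<pi> permutes B"
  shows "bij_betw (\<lambda>f. restrict (\<pi> \<circ> f) A) (inj_funcset A B) (inj_funcset A B)"
proof (rule bij_betw_byWitness[where f' = "\<lambda>f. restrict (inv \<pi> \<circ> f) A"])
  show "(\<lambda>f. restrict (\<pi> \<circ> f) A) ` inj_funcset A B \<subseteq> inj_funcset A B"
    and "(\<lambda>f. restrict (inv \<pi> \<circ> f) A) ` inj_funcset A B \<subseteq> inj_funcset A B"
    using assms permutes_inv[OF assms] by (auto intro: permutes_comp_in_inj_funcset)
  have "f = restrict f A" if "f \<in> inj_funcset A B" for f
    using that by (auto simp: inj_funcset_def)
  then show "\<forall>f\<in>inj_funcset A B. restrict (inv \<pi> \<circ> restrict (\<pi> \<circ> f) A) A = f"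
    and "\<forall>f\<in>inj_funcset A B. restrict (\<pi> \<circ> restrict (inv \<pi> \<circ> f) A) A = f"
    using assms by (auto simp: permutes_inverses cong: restrict_cong)
qed

lemma map_pmf_inj_funcset_equivariant:
  assumes "finite A" "finite B" "card A \<le> card B" "\<pi> permutes B"
    and equiv: "\<And>f. f \<in> inj_funcset A B \<Longrightarrow> g (restrict (\<pi> \<circ> f) A) = \<psi> (g f)"
  shows "map_pmf \<psi> (map_pmf g (pmf_of_set (inj_funcset A B)))
           = map_pmf g (pmf_of_set (inj_funcset A B))"
proof -
  let ?F = "inj_funcset A B"
  let ?\<Phi> = "\<lambda>f. restrict (\<pi> \<circ> f) A"
  have fin: "finite ?F" and ne: "?F \<noteq> {}"
    using assms(1-3) by (simp_all add: finite_inj_funcset inj_funcset_nonempty)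
  have bij: "bij_betw ?\<Phi> ?F ?F"
    using assms(4) by (rule bij_betw_inj_funcset_permutes)
  have "map_pmf ?\<Phi> (pmf_of_set ?F) = pmf_of_set ?F"
    using map_pmf_of_set_inj[OF bij_betw_imp_inj_on[OF bij] ne fin] bij_betw_imp_surj_on[OF bij]
    by simp
  moreover have "map_pmf \<psi> (map_pmf g (pmf_of_set ?F)) = map_pmf g (map_pmf ?\<Phi> (pmf_of_set ?F))"
    unfolding pmf.map_comp using fin ne equiv by (intro pmf.map_cong) simp_all
  ultimately show ?thesis
    by simp
qed

lemma exists_permutes_pair:
  assumes "p \<in> B" "p' \<in> B" "p \<noteq> p'" "q \<in> B" "q' \<in> B" "q \<noteq> q'"
  shows "\<exists>\<pi>. \<pi> permutes B \<and> \<pi> p = q \<and> \<pi> p' = q'"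
proof -
  define s where "s = Transposition.transpose p q p'"
  have "s \<in> B" "s \<noteq> q"
    using assms by (auto simp: s_def Transposition.transpose_def)
  then have "Transposition.transpose s q' \<circ> Transposition.transpose p q permutes B"
    and "(Transposition.transpose s q' \<circ> Transposition.transpose p q) p = q"
    and "(Transposition.transpose s q' \<circ> Transposition.transpose p q) p' = q'"
    using assms by (simp_all add: permutes_compose permutes_swap_id s_def Transposition.transpose_def)
  then show ?thesis
    by blast
qed

definition distinct_pairs :: "'a set \<Rightarrow> ('a \<times> 'a) set" where
  "distinct_pairs B = {(x, y) \<in> B \<times> B. x \<noteq> y}"

lemma finite_distinct_pairs: "finite B \<Longrightarrow> finite (distinct_pairs B)"
  unfolding distinct_pairs_def by (rule finite_subset[of _ "B \<times> B"]) auto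

lemma card_distinct_pairs:
  assumes "finite B"
  shows "card (distinct_pairs B) = card B * (card B - 1)"
proof -
  have "distinct_pairs B = B \<times> B - (\<lambda>x. (x, x)) ` B"
    by (auto simp: distinct_pairs_def)
  moreover have "card ((\<lambda>x. (x, x)) ` B) = card B"
    by (rule card_image) (simp add: inj_on_def)
  ultimately show ?thesis
    using assms by (simp add: card_Diff_subset card_cartesian_product diff_mult_distrib2 image_subset_iff)
qed

lemma map_pmf_component_inj_funcset:
  assumes "finite A" "finite B" "card A \<le> card B" "a \<in> A"
  shows "map_pmf (\<lambda>f. f a) (pmf_of_set (inj_funcset A B)) = pmf_of_set B"
proof (rule pmf_of_set_eqI_transitive_symmetry)
  show "set_pmf (map_pmf (\<lambda>f. f a) (pmf_of_set (inj_funcset A B))) \<subseteq> B"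
    unfolding set_map_pmf set_pmf_of_inj_funcset[OF assms(1-3)] using assms(4)
    by (auto simp: inj_funcset_def)
  fix y y' assume "y \<in> B" "y' \<in> B"
  then have "Transposition.transpose y y' permutes B"
    by (rule permutes_swap_id)
  then have "map_pmf (Transposition.transpose y y') (map_pmf (\<lambda>f. f a) (pmf_of_set (inj_funcset A B)))
               = map_pmf (\<lambda>f. f a) (pmf_of_set (inj_funcset A B))"
    using assms(4) by (intro map_pmf_inj_funcset_equivariant[OF assms(1-3)]) simp_all
  then show "\<exists>\<psi>. inj \<psi> \<and> \<psi> y = y'
               \<and> map_pmf \<psi> (map_pmf (\<lambda>f. f a) (pmf_of_set (inj_funcset A B)))
                   = map_pmf (\<lambda>f. f a) (pmf_of_set (inj_funcset A B))"
    using inj_transpose[of y y'] transpose_apply_first[of y y'] by blast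
qed fact

lemma map_pmf_pair_inj_funcset:
  assumes "finite A" "finite B" "card A \<le> card B" "a \<in> A" "a' \<in> A" "a \<noteq> a'"
  shows "map_pmf (\<lambda>f. (f a, f a')) (pmf_of_set (inj_funcset A B)) = pmf_of_set (distinct_pairs B)"
proof (rule pmf_of_set_eqI_transitive_symmetry)
  show "finite (distinct_pairs B)"
    using assms(2) by (rule finite_distinct_pairs)
  show "set_pmf (map_pmf (\<lambda>f. (f a, f a')) (pmf_of_set (inj_funcset A B))) \<subseteq> distinct_pairs B"
    unfolding set_map_pmf set_pmf_of_inj_funcset[OF assms(1-3)] using assms(4-6)
    by (auto simp: inj_funcset_def distinct_pairs_def dest: inj_onD)
  fix y y' assume y: "y \<in> distinct_pairs B" and y': "y' \<in> distinct_pairs B"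
  obtain p p' q q' where pq: "y = (p, p')" "y' = (q, q')"
    by (cases y, cases y') blast
  obtain \<pi> where \<pi>: "\<pi> permutes B" "\<pi> p = q" "\<pi> p' = q'"
    using exists_permutes_pair[of p B p' q q'] y y' unfolding pq distinct_pairs_def by blast
  have "map_pmf (map_prod \<pi> \<pi>) (map_pmf (\<lambda>f. (f a, f a')) (pmf_of_set (inj_funcset A B)))
          = map_pmf (\<lambda>f. (f a, f a')) (pmf_of_set (inj_funcset A B))"
    using assms(4,5) by (intro map_pmf_inj_funcset_equivariant[OF assms(1-3) \<pi>(1)]) simp_all
  moreover have "inj (map_prod \<pi> \<pi>)"
    using permutes_inj[OF \<pi>(1)] by (simp add: prod.inj_map)
  moreover have "map_prod \<pi> \<pi> y = y'"
    using \<pi>(2,3) pq by simp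
  ultimately show "\<exists>\<psi>. inj \<psi> \<and> \<psi> y = y'
               \<and> map_pmf \<psi> (map_pmf (\<lambda>f. (f a, f a')) (pmf_of_set (inj_funcset A B)))
                   = map_pmf (\<lambda>f. (f a, f a')) (pmf_of_set (inj_funcset A B))"
    by blast
qed

lemma prob_inj_funcset_component_in:
  assumes "finite A" "finite B" "card A \<le> card B" "a \<in> A"
  shows "measure_pmf.prob (pmf_of_set (inj_funcset A B)) {f. f a \<in> T} = card (B \<inter> T) / card B"
proof -
  have "card A > 0"
    using assms(1,4) card_gt_0_iff by blast
  then have "B \<noteq> {}"
    using assms(3) by auto
  have "measure_pmf.prob (pmf_of_set (inj_funcset A B)) {f. f a \<in> T}
          = measure_pmf.prob (map_pmf (\<lambda>f. f a) (pmf_of_set (inj_funcset A B))) T"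
    by (simp add: vimage_def)
  also have "\<dots> = card (B \<inter> T) / card B"
    using \<open>B \<noteq> {}\<close> assms(2) by (simp add: map_pmf_component_inj_funcset[OF assms] measure_pmf_of_set)
  finally show ?thesis .
qed

lemma prob_inj_funcset_pair_in:
  assumes "finite A" "finite B" "card A \<le> card B" "a \<in> A" "a' \<in> A" "a \<noteq> a'" "T \<subseteq> B"
  shows "measure_pmf.prob (pmf_of_set (inj_funcset A B)) {f. f a \<in> T \<and> f a' \<in> T}
           = real (card T * (card T - 1)) / real (card B * (card B - 1))"
proof -
  have "2 \<le> card A"
    using card_mono[OF assms(1), of "{a, a'}"] assms(4-6) by simp
  then have "distinct_pairs B \<noteq> {}"
    using assms(3) card_distinct_pairs[OF assms(2)] by (cases "card B") auto
  have "measure_pmf.prob (pmf_of_set (inj_funcset A B)) {f. f a \<in> T \<and> f a' \<in> T}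
          = measure_pmf.prob (map_pmf (\<lambda>f. (f a, f a')) (pmf_of_set (inj_funcset A B))) (T \<times> T)"
    by (simp add: vimage_def)
  also have "\<dots> = card (distinct_pairs B \<inter> T \<times> T) / card (distinct_pairs B)"
    using \<open>distinct_pairs B \<noteq> {}\<close> assms(2)
    by (simp add: map_pmf_pair_inj_funcset[OF assms(1-6)] measure_pmf_of_set finite_distinct_pairs)
  also have "distinct_pairs B \<inter> T \<times> T = distinct_pairs T"
    using assms(7) by (auto simp: distinct_pairs_def)
  finally show ?thesis
    using finite_subset[OF assms(7,2)] assms(2) by (simp add: card_distinct_pairs)
qed

lemma ratio_pairs_without_replacement_le:
  assumes "1 \<le> d"
  shows "real (k * (k - 1)) / real (k * d * (k * d - 1)) \<le> 1 / (real d)\<^sup>2"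
proof (cases "k * d \<le> 1")
  case True
  have "k * 1 \<le> 1"
    using mult_le_mono2[OF assms, of k] True by (rule le_trans)
  then have "k \<le> 1"
    by simp
  then have zero: "k * (k - 1) = 0"
    by (cases k) auto
  show ?thesis
    unfolding zero by simp
next
  case False
  have "(k - 1) * d \<le> k * d - 1"
    using assms by (simp add: diff_mult_distrib)
  then have "k * d * ((k - 1) * d) \<le> k * d * (k * d - 1)"
    by (rule mult_le_mono2)
  then have le: "real (k * (k - 1)) * (real d)\<^sup>2 \<le> real (k * d * (k * d - 1))"
    unfolding power2_eq_square of_nat_mult[symmetric] of_nat_le_iff by (simp add: ac_simps)
  have pos: "0 < real (k * d * (k * d - 1))"
    unfolding of_nat_0_less_iff using False by (intro mult_pos_pos[of "k * d" "k * d - 1"]) linarith+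
  have frac: "a / b \<le> 1 / c" if "a * c \<le> b" "0 < b" "0 < c" for a b c :: real
    using that by (simp add: field_simps)
  show ?thesis
    using assms by (intro frac[OF le pos]) simp
qed

lemma prob_Pi_pmf_eq_on:
  assumes "finite A" "S \<subseteq> A"
  shows "measure_pmf.prob (Pi_pmf A dflt (\<lambda>_. q)) {h. \<forall>x\<in>S. h x = y} = pmf q y ^ card S"
proof -
  have "{h. \<forall>x\<in>S. h x = y} = Pi A (\<lambda>x. if x \<in> S then {y} else UNIV)"
    using assms(2) by (auto simp: Pi_def)
  then have "measure_pmf.prob (Pi_pmf A dflt (\<lambda>_. q)) {h. \<forall>x\<in>S. h x = y}
               = (\<Prod>x\<in>A. if x \<in> S then pmf q y else 1)"
    using assms(1) by (simp add: measure_Pi_pmf_Pi if_distrib measure_pmf_single cong: if_cong)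
  also have "\<dots> = pmf q y ^ card S"
    using assms by (simp add: prod.If_cases Int_absorb1 Int_commute)
  finally show ?thesis .
qed

lemma col_matrix_ne_zero_iff: "col_matrix n h \<sigma> t c \<noteq> 0 \<longleftrightarrow> c \<in> {1..n} \<and> h c = t"
  by (simp add: col_matrix_def sign_of_def)

lemma prob_col_matrix_row_pattern:
  "measure_pmf.prob (map_pmf (\<lambda>(h, \<sigma>). col_matrix n h \<sigma>) (pair_pmf H \<Sigma>)) {R. Q (\<lambda>c. R t c \<noteq> 0)}
     = measure_pmf.prob H {h. Q (\<lambda>c. c \<in> {1..n} \<and> h c = t)}"
proof -
  have "measure_pmf.prob (map_pmf (\<lambda>(h, \<sigma>). col_matrix n h \<sigma>) (pair_pmf H \<Sigma>)) {R. Q (\<lambda>c. R t c \<noteq> 0)}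
      = measure_pmf.prob (map_pmf fst (pair_pmf H \<Sigma>)) {h. Q (\<lambda>c. c \<in> {1..n} \<and> h c = t)}"
    by (simp add: vimage_def case_prod_beta col_matrix_ne_zero_iff)
  then show ?thesis
    by (simp only: map_fst_pair_pmf)
qed

lemma prob_SE_row_entries:
  assumes "1 \<le> d" "t \<in> {1..d}" "S \<subseteq> {1..n}"
  shows "measure_pmf.prob (SE_pmf d n) {R. \<forall>c\<in>S. R t c \<noteq> 0} = (1 / d) ^ card S"
proof -
  have "{h. \<forall>c\<in>S. c \<in> {1..n} \<and> h c = t} = {h. \<forall>c\<in>S. h c = t}"
    using assms(3) by auto
  then show ?thesis
    unfolding SE_pmf_def prob_col_matrix_row_pattern[where Q = "\<lambda>z. \<forall>c\<in>S. z c"]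
    using assms by (simp add: prob_Pi_pmf_eq_on)
qed

lemma length_D_list: "length (D_list d n) = nat \<lceil>real n / real d\<rceil> * d"
  by (simp add: D_list_def length_concat sum_list_replicate)

lemma le_length_D_list:
  assumes "1 \<le> d"
  shows "n \<le> length (D_list d n)"
proof -
  have d: "0 < real d"
    using assms by simp
  have "real n \<le> real_of_int \<lceil>real n / real d\<rceil> * real d"
    unfolding pos_divide_le_eq[OF d, symmetric] by (rule le_of_int_ceiling)
  then have "real n \<le> real (nat \<lceil>real n / real d\<rceil> * d)"
    by simp
  then show ?thesis
    unfolding length_D_list of_nat_le_iff .
qed

lemma length_filter_concat_replicate:
  "length (filter P (concat (replicate k xs))) = k * length (filter P xs)"
  by (induction k) simp_all

lemma card_positions_D_list:
  assumes "t \<in> {1..d}"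
  shows "card {j. j < length (D_list d n) \<and> D_list d n ! j = t} = nat \<lceil>real n / real d\<rceil>"
proof -
  have "length (filter (\<lambda>x. x = t) [1..<d+1]) = 1"
    using assms by (simp add: distinct_length_filter del: upt_Suc)
  moreover have "card {j. j < length (D_list d n) \<and> D_list d n ! j = t}
                   = length (filter (\<lambda>x. x = t) (D_list d n))"
    by (simp add: length_filter_conv_card)
  ultimately show ?thesis
    by (simp add: D_list_def length_filter_concat_replicate del: upt_Suc)
qed

lemma prob_SSSE_row_entries:
  assumes "1 \<le> d" "S \<subseteq> {1..n}"
  defines "L \<equiv> length (D_list d n)"
  shows "measure_pmf.prob (SSSE_pmf d n) {R. \<forall>c\<in>S. R t c \<noteq> 0}
           = measure_pmf.prob (pmf_of_set (inj_funcset {1..n} {0..<L}))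
               {f. \<forall>c\<in>S. f c \<in> {j. j < L \<and> D_list d n ! j = t}}"
proof -
  have "measure_pmf.prob (SSSE_pmf d n) {R. \<forall>c\<in>S. R t c \<noteq> 0}
          = measure_pmf.prob (pmf_of_set (inj_funcset {1..n} {0..<L}))
              {f. \<forall>c\<in>S. c \<in> {1..n} \<and> D_list d n ! f c = t}"
    unfolding SSSE_pmf_def prob_col_matrix_row_pattern[where Q = "\<lambda>z. \<forall>c\<in>S. z c"]
      S_seq_pmf_def inj_funcset_def[symmetric] L_def
    by (simp add: vimage_def)
  also have "\<dots> = measure_pmf.prob (pmf_of_set (inj_funcset {1..n} {0..<L}))
                     {f. \<forall>c\<in>S. f c \<in> {j. j < L \<and> D_list d n ! j = t}}"
    using assms(2) le_length_D_list[OF assms(1), of n]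
    by (intro measure_pmf_prob_cong_set_pmf)
       (auto simp: set_pmf_of_inj_funcset L_def dest: inj_funcset_apply_in)
  finally show ?thesis .
qed

lemma prob_SSSE_row_entry:
  assumes "1 \<le> d" "t \<in> {1..d}" "c \<in> {1..n}"
  shows "measure_pmf.prob (SSSE_pmf d n) {R. R t c \<noteq> 0} = 1 / d"
proof -
  define k where "k = nat \<lceil>real n / real d\<rceil>"
  define L where "L = length (D_list d n)"
  define P where "P = {j. j < L \<and> D_list d n ! j = t}"
  have nL: "n \<le> L" and Lk: "L = k * d" and cP: "card P = k"
    using le_length_D_list[OF assms(1)] length_D_list card_positions_D_list[OF assms(2)]
    by (simp_all add: L_def k_def P_def)
  have "measure_pmf.prob (SSSE_pmf d n) {R. R t c \<noteq> 0}
          = measure_pmf.prob (pmf_of_set (inj_funcset {1..n} {0..<L})) {f. f c \<in> P}"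
    using prob_SSSE_row_entries[OF assms(1), of "{c}" n t] assms(3) by (simp add: L_def P_def)
  also have "\<dots> = card ({0..<L} \<inter> P) / card {0..<L}"
    using assms(3) nL by (intro prob_inj_funcset_component_in) simp_all
  also have "{0..<L} \<inter> P = P"
    by (auto simp: P_def)
  moreover have "k \<noteq> 0"
    using nL Lk assms(3) by (cases k) auto
  ultimately show ?thesis
    using cP Lk by simp
qed

lemma prob_SSSE_row_entry_pair_le:
  assumes "1 \<le> d" "t \<in> {1..d}" "c \<in> {1..n}" "c' \<in> {1..n}" "c \<noteq> c'"
  shows "measure_pmf.prob (SSSE_pmf d n) {R. R t c \<noteq> 0 \<and> R t c' \<noteq> 0} \<le> 1 / (real d)\<^sup>2"
proof -
  define k where "k = nat \<lceil>real n / real d\<rceil>"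
  define L where "L = length (D_list d n)"
  define P where "P = {j. j < L \<and> D_list d n ! j = t}"
  have nL: "n \<le> L" and Lk: "L = k * d" and cP: "card P = k"
    using le_length_D_list[OF assms(1)] length_D_list card_positions_D_list[OF assms(2)]
    by (simp_all add: L_def k_def P_def)
  have "measure_pmf.prob (SSSE_pmf d n) {R. R t c \<noteq> 0 \<and> R t c' \<noteq> 0}
          = measure_pmf.prob (pmf_of_set (inj_funcset {1..n} {0..<L})) {f. f c \<in> P \<and> f c' \<in> P}"
    using prob_SSSE_row_entries[OF assms(1), of "{c, c'}" n t] assms(3,4) by (simp add: L_def P_def)
  also have "\<dots> = real (card P * (card P - 1)) / real (card {0..<L} * (card {0..<L} - 1))"
    using assms(3-5) nL by (intro prob_inj_funcset_pair_in) (auto simp: P_def)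
  also have "\<dots> \<le> 1 / (real d)\<^sup>2"
    using ratio_pairs_without_replacement_le[OF assms(1)] by (simp add: cP Lk)
  finally show ?thesis .
qed

theorem theorem1:
  fixes d n t :: nat
  assumes "1 \<le> d" and "d \<le> n" and "t \<in> {1..d}"
  shows "measure_pmf.expectation (SSSE_pmf d n) (row_nnz n t)
           = measure_pmf.expectation (SE_pmf d n) (row_nnz n t)
       \<and> measure_pmf.variance (SSSE_pmf d n) (row_nnz n t)
           \<le> measure_pmf.variance (SE_pmf d n) (row_nnz n t)"
proof -
  have single: "measure_pmf.prob (SSSE_pmf d n) {R. R t c \<noteq> 0}
                  = measure_pmf.prob (SE_pmf d n) {R. R t c \<noteq> 0}" if "c \<in> {1..n}" for c
    using prob_SSSE_row_entry[OF assms(1,3) that] prob_SE_row_entries[OF assms(1,3), of "{c}" n] that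
    by simp
  have pair: "measure_pmf.prob (SSSE_pmf d n) {R. R t c \<noteq> 0 \<and> R t c' \<noteq> 0}
                \<le> measure_pmf.prob (SE_pmf d n) {R. R t c \<noteq> 0 \<and> R t c' \<noteq> 0}"
    if "c \<in> {1..n}" "c' \<in> {1..n}" "c \<noteq> c'" for c c'
    using prob_SSSE_row_entry_pair_le[OF assms(1,3) that] prob_SE_row_entries[OF assms(1,3), of "{c, c'}" n] that
    by (simp add: power_one_over power2_eq_square)
  show ?thesis
    unfolding row_nnz_def by (rule card_filter_expectation_eq_variance_le[OF finite_atLeastAtMost single pair])
qed

end
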